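(* Let $\mathbb{F}$ be a field with $\mathrm{char}(\mathbb{F})\neq 2,3$. The map $$(\beta_3,\beta_6,\dots,\beta_{3k})\mapsto\Big(\sum_{j=1}^k\beta_{3j}\,p_{\bar1,3j}\Big)$$ (ideal generated by the indicated element) induces a bijection between the set of tuples $(\beta_3,\dots,\beta_{3k})\in\mathbb{F}^k$ with $k\in\mathbb{N}$ and $\beta_{3k}\neq0$, taken up to non-zero scalar multiples, and the set of non-zero ideals $I$ of $\hat{\mathcal{H}}$ with $I\subseteq J$. The inverse map sends $I$ to the tuple of coefficients of an element of minimal $J$-degree in $I$. In particular, every ideal contained in $J$ is principal.
   Context: Notation: $\mathbb{N}=\{1,2,3,\dots\}$, $3\mathbb{N}=\{3,6,9,\dots\}$; for $r\in\mathbb{Z}$, $\bar r=r+3\mathbb{Z}\in\mathbb{Z}_3$. The algebra $\hat{\mathcal{H}}$ is the commutative $\mathbb{F}$-algebra with basis $\{a_i:i\in\mathbb{Z}\}\cup\{s_j:j\in\mathbb{N}\}\cup\{p_{\bar r,k}:\bar r\in\{\bar1,\bar2\},\ k\in 3\mathbb{N}\}$, where $s_0=0$, $p_{\bar r,j}=0$ for all $\bar r$ whenever $j\notin 3\mathbb{N}$, $p_{\bar 0,j}=-p_{\bar1,j}-p_{\bar2,j}$, $z_{\bar r,j}=p_{\bar r+\bar1,j}-p_{\bar r-\bar1,j}$, and for $i,i'\in\mathbb{Z}$, $j,l\in\mathbb{N}$, $h,k\in3\mathbb{N}$, $\bar r,\bar t\in\mathbb{Z}_3$: (H1) $a_ia_{i'}=\tfrac12(a_i+a_{i'})+s_{|i-i'|}+z_{\bar\imath,|i-i'|}$;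 (H2) $a_is_j=-\tfrac34a_i+\tfrac38(a_{i-j}+a_{i+j})+\tfrac32 s_j-z_{\bar\imath,j}$; (H3) $a_ip_{\bar r,k}=\tfrac32p_{\bar r,k}-p_{-(\bar\imath+\bar r),k}$; (H4) $s_js_l=\tfrac34(s_j+s_l)-\tfrac38(s_{|j-l|}+s_{j+l})$; (H5) $s_jp_{\bar r,k}=\tfrac34(p_{\bar r,j}+p_{\bar r,k})-\tfrac38(p_{\bar r,|j-k|}+p_{\bar r,j+k})$; (H6) $p_{\bar r,h}p_{\bar t,k}=\tfrac14(z_{-(\bar r+\bar t),h}+z_{-(\bar r+\bar t),k})-\tfrac18(z_{-(\bar r+\bar t),|h-k|}+z_{-(\bar r+\bar t),h+k})$. $J=\langle p_{\bar1,j},p_{\bar2,j}:j\in3\mathbb{N}\rangle$ (an ideal). Every non-zero $x\in J$ is uniquely $x=\sum_{j\in3\mathbb{N},\,j\le 3m}\sum_{\bar r\in\{\bar1,\bar2\}}\beta_{\bar r,j}p_{\bar r,j}$ with $\beta_{\bar r,3m}\neq0$ for some $\bar r$; its $p$-level is $3m$ and its $J$-degree is $3m+\sum_{r\in\{1,2\},\ \beta_{\bar r,3m}\neq0}\tfrac r4$. *)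

theory Defs
  imports Complex_Main
begin

text \<open>Basis indices of the algebra H-hat:
  A i  = a_i (i :: int),  S j = s_j (valid for j >= 1),
  P1 k = p_{1,k}, P2 k = p_{2,k} (valid for k in 3N = {3,6,9,...}).\<close>
datatype bidx = A int | S nat | P1 nat | P2 nat

fun valid_idx :: "bidx \<Rightarrow> bool" where
  "valid_idx (A i) = True"
| "valid_idx (S j) = (j \<ge> 1)"
| "valid_idx (P1 k) = (k > 0 \<and> 3 dvd k)"
| "valid_idx (P2 k) = (k > 0 \<and> 3 dvd k)"

definition supp :: "(bidx \<Rightarrow> 'a::zero) \<Rightarrow> bidx set" where
  "supp x = {b. x b \<noteq> 0}"

definition Hc :: "(bidx \<Rightarrow> 'a::field) set" where
  "Hc = {x. finite (supp x) \<and> supp x \<subseteq> {b. valid_idx b}}"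

definition zerov :: "bidx \<Rightarrow> 'a::field" where "zerov = (\<lambda>b. 0)"
definition vadd :: "(bidx \<Rightarrow> 'a::field) \<Rightarrow> (bidx \<Rightarrow> 'a) \<Rightarrow> bidx \<Rightarrow> 'a" where
  "vadd x y = (\<lambda>b. x b + y b)"
definition vsub :: "(bidx \<Rightarrow> 'a::field) \<Rightarrow> (bidx \<Rightarrow> 'a) \<Rightarrow> bidx \<Rightarrow> 'a" where
  "vsub x y = (\<lambda>b. x b - y b)"
definition smul :: "'a::field \<Rightarrow> (bidx \<Rightarrow> 'a) \<Rightarrow> bidx \<Rightarrow> 'a" where
  "smul c x = (\<lambda>b. c * x b)"

definition ev :: "bidx \<Rightarrow> bidx \<Rightarrow> 'a::field" where
  "ev b = (\<lambda>c. if c = b then 1 else 0)"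

definition av :: "int \<Rightarrow> bidx \<Rightarrow> 'a::field" where "av i = ev (A i)"

text \<open>s_j, with the convention s_0 = 0.\<close>
definition sv :: "nat \<Rightarrow> bidx \<Rightarrow> 'a::field" where
  "sv j = (if j = 0 then zerov else ev (S j))"

text \<open>p_{r,j} for r an integer taken mod 3; p_{r,j} = 0 unless j in 3N,
  and p_{0,j} = - p_{1,j} - p_{2,j}.\<close>
definition pv :: "int \<Rightarrow> nat \<Rightarrow> bidx \<Rightarrow> 'a::field" where
  "pv r j = (if j > 0 \<and> 3 dvd j then
      (if r mod 3 = 1 then ev (P1 j)
       else if r mod 3 = 2 then ev (P2 j)
       else vsub (smul (-1) (ev (P1 j))) (ev (P2 j)))
    else zerov)"

definition zv :: "int \<Rightarrow> nat \<Rightarrow> bidx \<Rightarrow> 'a::field" where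
  "zv r j = vsub (pv (r + 1) j) (pv (r - 1) j)"

definition adiff :: "nat \<Rightarrow> nat \<Rightarrow> nat" where
  "adiff j l = nat \<bar>int j - int l\<bar>"

text \<open>Product of basis elements, table (H1)--(H6), extended symmetrically.\<close>
definition bm_as :: "int \<Rightarrow> nat \<Rightarrow> bidx \<Rightarrow> 'a::field" where
  "bm_as i j = vadd (vadd (smul (-3/4) (av i)) (smul (3/8) (vadd (av (i - int j)) (av (i + int j)))))
                    (vsub (smul (3/2) (sv j)) (zv i j))"

definition bm_ap :: "int \<Rightarrow> int \<Rightarrow> nat \<Rightarrow> bidx \<Rightarrow> 'a::field" where
  "bm_ap i r k = vsub (smul (3/2) (pv r k)) (pv (-(i + r)) k)"

definition bm_sp :: "nat \<Rightarrow> int \<Rightarrow> nat \<Rightarrow> bidx \<Rightarrow> 'a::field" where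
  "bm_sp j r k = vsub (smul (3/4) (vadd (pv r j) (pv r k)))
                      (smul (3/8) (vadd (pv r (adiff j k)) (pv r (j + k))))"

definition bm_pp :: "int \<Rightarrow> nat \<Rightarrow> int \<Rightarrow> nat \<Rightarrow> bidx \<Rightarrow> 'a::field" where
  "bm_pp r h t k = vsub (smul (1/4) (vadd (zv (-(r + t)) h) (zv (-(r + t)) k)))
                        (smul (1/8) (vadd (zv (-(r + t)) (adiff h k)) (zv (-(r + t)) (h + k))))"

fun bm :: "bidx \<Rightarrow> bidx \<Rightarrow> bidx \<Rightarrow> 'a::field" where
  "bm (A i) (A i') = vadd (vadd (smul (1/2) (vadd (av i) (av i'))) (sv (nat \<bar>i - i'\<bar>)))
                          (zv i (nat \<bar>i - i'\<bar>))"
| "bm (A i) (S j) = bm_as i j"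
| "bm (S j) (A i) = bm_as i j"
| "bm (A i) (P1 k) = bm_ap i 1 k"
| "bm (A i) (P2 k) = bm_ap i 2 k"
| "bm (P1 k) (A i) = bm_ap i 1 k"
| "bm (P2 k) (A i) = bm_ap i 2 k"
| "bm (S j) (S l) = vsub (smul (3/4) (vadd (sv j) (sv l)))
                         (smul (3/8) (vadd (sv (adiff j l)) (sv (j + l))))"
| "bm (S j) (P1 k) = bm_sp j 1 k"
| "bm (S j) (P2 k) = bm_sp j 2 k"
| "bm (P1 k) (S j) = bm_sp j 1 k"
| "bm (P2 k) (S j) = bm_sp j 2 k"
| "bm (P1 h) (P1 k) = bm_pp 1 h 1 k"
| "bm (P1 h) (P2 k) = bm_pp 1 h 2 k"
| "bm (P2 h) (P1 k) = bm_pp 2 h 1 k"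
| "bm (P2 h) (P2 k) = bm_pp 2 h 2 k"

definition hmult :: "(bidx \<Rightarrow> 'a::field) \<Rightarrow> (bidx \<Rightarrow> 'a) \<Rightarrow> bidx \<Rightarrow> 'a" where
  "hmult x y = (\<lambda>c. \<Sum>b\<in>supp x. \<Sum>b'\<in>supp y. x b * y b' * bm b b' c)"

text \<open>Ideals of the (commutative, non-associative) algebra H-hat.\<close>
definition is_ideal :: "(bidx \<Rightarrow> 'a::field) set \<Rightarrow> bool" where
  "is_ideal I \<longleftrightarrow> I \<subseteq> Hc \<and> zerov \<in> I \<and>
     (\<forall>x\<in>I. \<forall>y\<in>I. vadd x y \<in> I) \<and>
     (\<forall>c. \<forall>x\<in>I. smul c x \<in> I) \<and>
     (\<forall>x\<in>I. \<forall>y\<in>Hc. hmult y x \<in> I)"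

definition ideal_gen :: "(bidx \<Rightarrow> 'a::field) set \<Rightarrow> (bidx \<Rightarrow> 'a) set" where
  "ideal_gen G = \<Inter>{I. is_ideal I \<and> G \<subseteq> I}"

definition Jid :: "(bidx \<Rightarrow> 'a::field) set" where
  "Jid = ideal_gen {ev b | b k. k > 0 \<and> 3 dvd k \<and> (b = P1 k \<or> b = P2 k)}"

definition p_level :: "(bidx \<Rightarrow> 'a::field) \<Rightarrow> nat" where
  "p_level x = Max {k. x (P1 k) \<noteq> 0 \<or> x (P2 k) \<noteq> 0}"

definition J_degree :: "(bidx \<Rightarrow> 'a::field) \<Rightarrow> real" where
  "J_degree x = real (p_level x)
     + (if x (P1 (p_level x)) \<noteq> 0 then 1/4 else 0)
     + (if x (P2 (p_level x)) \<noteq> 0 then 2/4 else 0)"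

text \<open>Tuples (beta_3, ..., beta_{3k}) as lists of length k >= 1 with last entry non-zero.\<close>
definition valid_tuple :: "'a::field list \<Rightarrow> bool" where
  "valid_tuple \<beta> \<longleftrightarrow> \<beta> \<noteq> [] \<and> last \<beta> \<noteq> 0"

definition tuple_elt :: "'a::field list \<Rightarrow> bidx \<Rightarrow> 'a" where
  "tuple_elt \<beta> = (\<lambda>c. \<Sum>j<length \<beta>. (\<beta> ! j) * ev (P1 (3 * (j + 1))) c)"

end

theory Submission
  imports Defs "HOL-Computational_Algebra.Polynomial"
begin

text \<open>Send \<open>p\<^sub>1\<^sub>,\<^sub>3\<^sub>m\<close> to the pair of polynomials \<open>(1 - T\<^sub>m, 0)\<close> and
  \<open>p\<^sub>2\<^sub>,\<^sub>3\<^sub>m\<close> to \<open>(0, 1 - T\<^sub>m)\<close>, where \<open>T\<^sub>m\<close> is the \<open>m\<close>-th Chebyshev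
  polynomial. This identifies \<open>J\<close> with a space of pairs \<open>(f, g)\<close>, and by
  \<open>2 T\<^sub>m T\<^sub>n = T\<^sub>m\<^sub>+\<^sub>n + T\<^sub>|\<^sub>m\<^sub>-\<^sub>n\<^sub>|\<close> the algebra acts on it polynomially:
  \<open>s\<^sub>3\<close> multiplies both coordinates by \<open>(3/4)(1 - x)\<close>, and \<open>a\<^sub>1\<close>, \<open>a\<^sub>2\<close> act by
  constant matrices that (when \<open>2, 3\<close> are invertible) project onto the first coordinate and
  copy it into the second. Hence every ideal inside \<open>J\<close> is
  \<open>{(f, g). h dvd f \<and> h dvd g}\<close>, generated by \<open>(h, 0)\<close>, and \<open>h\<close> is unique up to a
  scalar. The element \<open>(h, 0)\<close> is a tuple element and has minimal \<open>J\<close>-degree in its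
  ideal: the \<open>J\<close>-degree of \<open>(f, 0)\<close> is \<open>3 deg f + 1/4\<close>, while an element with
  \<open>g \<noteq> 0\<close> has \<open>J\<close>-degree at least \<open>3 deg g + 1/2\<close>.\<close>

lemma four_eight_nonzero: "(2::'a::field) \<noteq> 0 \<Longrightarrow> (4::'a) \<noteq> 0 \<and> (8::'a) \<noteq> 0"
proof -
  have "(4::'a) = 2 ^ 2" "(8::'a) = 2 ^ 3" by simp_all
  then show "(2::'a) \<noteq> 0 \<Longrightarrow> ?thesis" by (metis power_not_zero)
qed

lemma smult_sum_right: "smult c (\<Sum>i\<in>T. f i) = (\<Sum>i\<in>T. smult c (f i))"
  by (induct T rule: infinite_finite_induct) (auto simp: smult_add_right)

lemma dvd_antisym_poly_smult:
  assumes "p dvd q" "q dvd (p :: 'a::field poly)"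
  obtains c where "c \<noteq> 0" "q = smult c p"
proof (cases "p = 0")
  case True
  with assms show ?thesis
    using that[of 1] by simp
next
  case False
  obtain r s where r: "q = p * r" and s: "p = q * s"
    using assms by (elim dvdE)
  then have "p * (r * s) = p * 1"
    by (simp add: mult.assoc[symmetric])
  with False have "r dvd 1"
    by (metis dvdI mult_left_cancel)
  then obtain c where "r = [:c:]" "c \<noteq> 0"
    by (metis is_unit_poly_iff one_neq_zero dvd_0_left_iff)
  with r show ?thesis
    by (intro that) (simp_all add: mult.commute)
qed

fun chebyshev :: "nat \<Rightarrow> 'a::comm_ring_1 poly" where
  "chebyshev 0 = 1"
| "chebyshev (Suc 0) = [:0, 1:]"
| "chebyshev (Suc (Suc n)) = smult 2 ([:0, 1:] * chebyshev (Suc n)) - chebyshev n"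

lemma chebyshev_recurrence:
  "n \<ge> 1 \<Longrightarrow> smult 2 ([:0, 1:] * chebyshev n) = chebyshev (Suc n) + chebyshev (n - 1)"
  by (cases n) auto

lemma chebyshev_mult:
  "m \<le> n \<Longrightarrow> (chebyshev (m + n) :: 'a::comm_ring_1 poly) + chebyshev (n - m)
     = smult 2 (chebyshev m * chebyshev n)"
proof (induction m arbitrary: n rule: less_induct)
  case (less m)
  consider "m = 0" | "m = 1" | k where "m = Suc (Suc k)"
    by (metis One_nat_def not0_implies_Suc)
  then show ?case
  proof cases
    case 1
    then show ?thesis by (simp add: numeral_mult_conv_smult)
  next
    case 2
    with less.prems show ?thesis
      using chebyshev_recurrence[of n, where 'a='a] by (simp add: algebra_simps)
  next
    case (3 k)
    let ?x = "[:0, 1:] :: 'a poly"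
    have IH1: "(chebyshev (Suc k + n) :: 'a poly) + chebyshev (n - Suc k)
                 = smult 2 (chebyshev (Suc k) * chebyshev n)"
      and IH0: "(chebyshev (k + n) :: 'a poly) + chebyshev (n - k)
                 = smult 2 (chebyshev k * chebyshev n)"
      using less.IH[of "Suc k" n] less.IH[of k n] less.prems 3 by simp_all
    have up: "smult 2 (?x * chebyshev (Suc k + n)) = chebyshev (m + n) + chebyshev (k + n)"
      using chebyshev_recurrence[of "Suc k + n", where 'a='a] 3 by simp
    have down: "smult 2 (?x * chebyshev (n - Suc k)) = chebyshev (n - k) + chebyshev (n - m)"
      using chebyshev_recurrence[of "n - Suc k", where 'a='a] less.prems 3
      by (simp add: Suc_diff_Suc)
    have "smult 2 (chebyshev m * chebyshev n)
        = smult 2 (?x * smult 2 (chebyshev (Suc k) * chebyshev n))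
          - smult 2 (chebyshev k * chebyshev n)"
      by (simp add: 3 algebra_simps smult_diff_right del: mult_pCons_left mult_pCons_right)
    also have "\<dots> = smult 2 (?x * chebyshev (Suc k + n)) + smult 2 (?x * chebyshev (n - Suc k))
        - (chebyshev (k + n) + chebyshev (n - k))"
      unfolding IH1[symmetric] IH0[symmetric] by (simp only: distrib_left smult_add_right)
    also have "\<dots> = chebyshev (m + n) + chebyshev (n - m)"
      by (simp only: up down) simp
    finally show ?thesis by simp
  qed
qed

lemma chebyshev_mult_adiff:
  "(chebyshev (m + n) :: 'a::comm_ring_1 poly) + chebyshev (adiff m n)
     = smult 2 (chebyshev m * chebyshev n)"
  using chebyshev_mult[of m n, where 'a='a] chebyshev_mult[of n m, where 'a='a]
  by (cases "m \<le> n") (auto simp: adiff_def nat_diff_distrib add.commute mult.commute)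

lemma chebyshev_degree_coeff:
  "degree (chebyshev n :: 'a::comm_ring_1 poly) \<le> n \<and>
   coeff (chebyshev n :: 'a poly) n = 2 ^ (n - 1)"
proof (induction n rule: chebyshev.induct)
  case (3 n)
  then have "degree (chebyshev (Suc (Suc n)) :: 'a poly) \<le> Suc (Suc n)"
    by (intro degree_le) (auto simp: coeff_eq_0 coeff_pCons split: nat.split)
  with 3 show ?case
    by (simp add: coeff_eq_0)
qed simp_all

section \<open>The algebra and its ideals\<close>

lemma supp_ev [simp]: "supp (ev b :: bidx \<Rightarrow> 'a::field) = {b}"
  by (auto simp: supp_def ev_def)

lemma supp_zerov [simp]: "supp (zerov :: bidx \<Rightarrow> 'a::field) = {}"
  by (auto simp: supp_def zerov_def)

lemma supp_vadd: "supp (vadd x y) \<subseteq> supp x \<union> supp y"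
  by (auto simp: supp_def vadd_def)

lemma supp_vsub: "supp (vsub x y) \<subseteq> supp x \<union> supp y"
  by (auto simp: supp_def vsub_def)

lemma supp_smul: "supp (smul c x) \<subseteq> supp x"
  by (auto simp: supp_def smul_def)

lemma finite_supp_Hc: "x \<in> Hc \<Longrightarrow> finite (supp x)"
  by (simp add: Hc_def)

lemma Hc_vadd [simp]: "x \<in> Hc \<Longrightarrow> y \<in> Hc \<Longrightarrow> vadd x y \<in> Hc"
  using supp_vadd[of x y] unfolding Hc_def by (auto intro: finite_subset)

lemma Hc_vsub [simp]: "x \<in> Hc \<Longrightarrow> y \<in> Hc \<Longrightarrow> vsub x y \<in> Hc"
  using supp_vsub[of x y] unfolding Hc_def by (auto intro: finite_subset)

lemma Hc_smul [simp]: "x \<in> Hc \<Longrightarrow> smul c x \<in> Hc"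
  using supp_smul[of c x] unfolding Hc_def by (auto intro: finite_subset)

lemma Hc_zerov [simp]: "zerov \<in> Hc"
  by (simp add: Hc_def)

lemma Hc_ev [simp]: "valid_idx b \<Longrightarrow> ev b \<in> Hc"
  by (simp add: Hc_def)

lemma Hc_basis_elements [simp]: "av i \<in> Hc" "sv j \<in> Hc" "pv r k \<in> Hc" "zv r k \<in> Hc"
  by (simp_all add: av_def sv_def pv_def zv_def)

lemma Hc_bm [simp]: "bm b b' \<in> Hc"
  by (cases b; cases b') (simp_all add: bm_as_def bm_ap_def bm_sp_def bm_pp_def)

lemma lincomb_closed:
  assumes "zerov \<in> V" "\<And>x y. x \<in> V \<Longrightarrow> y \<in> V \<Longrightarrow> vadd x y \<in> V" "\<And>c x. x \<in> V \<Longrightarrow> smul c x \<in> V"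
    and "finite F" "\<And>i. i \<in> F \<Longrightarrow> f i \<in> V"
  shows "(\<lambda>c. \<Sum>i\<in>F. a i * f i c) \<in> V"
  using assms(4,5)
proof (induction F rule: finite_induct)
  case empty
  then show ?case using assms(1) by (simp add: zerov_def)
next
  case (insert i F)
  then have "(\<lambda>c. \<Sum>i\<in>insert i F. a i * f i c) = vadd (smul (a i) (f i)) (\<lambda>c. \<Sum>i\<in>F. a i * f i c)"
    by (simp add: vadd_def smul_def fun_eq_iff)
  with insert assms(2,3) show ?case by simp
qed

lemma hmult_ev_left: "hmult (ev b) x = (\<lambda>c. \<Sum>b'\<in>supp x. x b' * bm b b' c)"
  unfolding hmult_def supp_ev by (simp add: ev_def)

lemma hmult_eq_lincomb: "hmult y x = (\<lambda>c. \<Sum>b\<in>supp y. y b * hmult (ev b) x c)"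
  unfolding hmult_ev_left by (simp add: hmult_def sum_distrib_left mult.assoc)

lemma is_idealI:
  fixes I :: "(bidx \<Rightarrow> 'a::field) set"
  assumes "I \<subseteq> Hc" "zerov \<in> I" "\<And>x y. x \<in> I \<Longrightarrow> y \<in> I \<Longrightarrow> vadd x y \<in> I"
    "\<And>c x. x \<in> I \<Longrightarrow> smul c x \<in> I" "\<And>b x. x \<in> I \<Longrightarrow> valid_idx b \<Longrightarrow> hmult (ev b) x \<in> I"
  shows "is_ideal I"
  unfolding is_ideal_def
proof (intro conjI ballI allI assms)
  fix x y :: "bidx \<Rightarrow> 'a" assume x: "x \<in> I" and y: "y \<in> Hc"
  then have "b \<in> supp y \<Longrightarrow> valid_idx b" for b
    by (auto simp: Hc_def)
  with x y show "hmult y x \<in> I"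
    unfolding hmult_eq_lincomb[of y]
    by (intro lincomb_closed assms) (auto simp: finite_supp_Hc)
qed

lemma is_ideal_Hc: "is_ideal Hc"
  by (rule is_idealI) (auto simp: hmult_ev_left finite_supp_Hc intro!: lincomb_closed)

lemma ideal_vsub: "is_ideal I \<Longrightarrow> x \<in> I \<Longrightarrow> y \<in> I \<Longrightarrow> vsub x y \<in> I"
proof -
  have "vsub x y = vadd x (smul (-1) y)"
    by (simp add: vsub_def vadd_def smul_def fun_eq_iff)
  then show "is_ideal I \<Longrightarrow> x \<in> I \<Longrightarrow> y \<in> I \<Longrightarrow> vsub x y \<in> I"
    by (simp add: is_ideal_def)
qed

lemma is_ideal_Inter:
  assumes "F \<noteq> {}" "\<And>I. I \<in> F \<Longrightarrow> is_ideal I"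
  shows "is_ideal (\<Inter>F)"
  unfolding is_ideal_def
proof (intro conjI ballI allI)
  show "\<Inter>F \<subseteq> Hc" "zerov \<in> \<Inter>F"
    using assms by (fastforce simp: is_ideal_def)+
  show "vadd x y \<in> \<Inter>F" "smul c x \<in> \<Inter>F" if "x \<in> \<Inter>F" "y \<in> \<Inter>F" for x y c
    using assms that by (auto simp: is_ideal_def)
  show "hmult y x \<in> \<Inter>F" if "x \<in> \<Inter>F" "y \<in> Hc" for x y
    using assms that by (auto simp: is_ideal_def)
qed

lemma ideal_gen_least: "is_ideal I \<Longrightarrow> G \<subseteq> I \<Longrightarrow> ideal_gen G \<subseteq> I"
  unfolding ideal_gen_def by blast

lemma ideal_gen_base: "G \<subseteq> ideal_gen G"
  unfolding ideal_gen_def by blast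

lemma is_ideal_ideal_gen: "G \<subseteq> Hc \<Longrightarrow> is_ideal (ideal_gen G)"
  unfolding ideal_gen_def using is_ideal_Hc by (intro is_ideal_Inter) auto

lemma ideal_gen_smul:
  assumes c: "c \<noteq> 0" and t: "t \<in> Hc"
  shows "ideal_gen {smul c t} = ideal_gen {t :: bidx \<Rightarrow> 'a::field}"
proof -
  have I: "is_ideal (ideal_gen {t})" "is_ideal (ideal_gen {smul c t})"
    using t by (simp_all add: is_ideal_ideal_gen)
  have "smul (1/c) (smul c t) = t"
    using c by (simp add: smul_def fun_eq_iff)
  then have "smul c t \<in> ideal_gen {t}" "t \<in> ideal_gen {smul c t}"
    using I ideal_gen_base[of "{t}"] ideal_gen_base[of "{smul c t}"]
    by (auto simp: is_ideal_def) (metis insert_subset)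
  with I show ?thesis
    by (intro equalityI ideal_gen_least) simp_all
qed

lemma ideal_gen_zerov: "ideal_gen {zerov} = {zerov :: bidx \<Rightarrow> 'a::field}"
proof -
  have "is_ideal {zerov :: bidx \<Rightarrow> 'a}"
    by (rule is_idealI) (simp_all add: hmult_ev_left zerov_def vadd_def smul_def supp_def Hc_def)
  then show ?thesis
    using ideal_gen_base[of "{zerov}"] by (auto dest: ideal_gen_least[of _ "{zerov}"])
qed

section \<open>The span of the \<open>p\<close>'s\<close>

definition P_span :: "(bidx \<Rightarrow> 'a::field) set" where
  "P_span = {x \<in> Hc. supp x \<subseteq> range P1 \<union> range P2}"

lemma P_span_Hc: "x \<in> P_span \<Longrightarrow> x \<in> Hc"
  by (simp add: P_span_def)

lemma P_span_closed [simp]: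
  "x \<in> P_span \<Longrightarrow> y \<in> P_span \<Longrightarrow> vadd x y \<in> P_span"
  "x \<in> P_span \<Longrightarrow> y \<in> P_span \<Longrightarrow> vsub x y \<in> P_span"
  "x \<in> P_span \<Longrightarrow> smul c x \<in> P_span"
  "zerov \<in> P_span"
  using supp_vadd[of x y] supp_vsub[of x y] supp_smul[of c x] by (auto simp: P_span_def)

lemma P_span_ev [simp]: "k > 0 \<Longrightarrow> 3 dvd k \<Longrightarrow> ev (P1 k) \<in> P_span \<and> ev (P2 k) \<in> P_span"
  by (simp add: P_span_def)

lemma P_span_pv_zv [simp]: "pv r k \<in> P_span" "zv r k \<in> P_span"
  by (simp_all add: pv_def zv_def)

lemma P_span_outside: "x \<in> P_span \<Longrightarrow> c \<notin> range P1 \<union> range P2 \<Longrightarrow> x c = 0"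
  by (auto simp: P_span_def supp_def)

lemma P_span_nonzero_index:
  "x \<in> P_span \<Longrightarrow> sel \<in> {P1, P2} \<Longrightarrow> x (sel k) \<noteq> 0 \<Longrightarrow> k > 0 \<and> 3 dvd k"
  by (auto simp: P_span_def Hc_def supp_def)

lemma P_span_eqI:
  assumes "x \<in> P_span" "y \<in> P_span" "\<And>k. x (P1 k) = y (P1 k)" "\<And>k. x (P2 k) = y (P2 k)"
  shows "x = y"
proof
  fix c
  show "x c = y c"
    using assms P_span_outside[of x c] P_span_outside[of y c]
    by (cases "c \<in> range P1 \<union> range P2") auto
qed

lemma supp_P_span:
  "x \<in> P_span \<Longrightarrow> supp x = P1 ` {k. x (P1 k) \<noteq> 0} \<union> P2 ` {k. x (P2 k) \<noteq> 0}"
  by (auto simp: P_span_def supp_def)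

lemma bm_P_span: "b' \<in> range P1 \<union> range P2 \<Longrightarrow> bm b b' \<in> P_span"
  by (cases b) (auto simp: bm_ap_def bm_sp_def bm_pp_def)

lemma hmult_ev_P_span:
  assumes "x \<in> P_span"
  shows "hmult (ev b) x \<in> P_span"
proof -
  have "supp x \<subseteq> range P1 \<union> range P2" "finite (supp x)"
    using assms by (auto simp: P_span_def Hc_def)
  then show ?thesis
    unfolding hmult_ev_left by (intro lincomb_closed bm_P_span) auto
qed

lemma is_ideal_P_span: "is_ideal P_span"
  by (rule is_idealI) (auto simp: P_span_Hc hmult_ev_P_span)

lemma ideal_gen_singleton_subset_P_span: "x \<in> P_span \<Longrightarrow> ideal_gen {x} \<subseteq> P_span"
  by (simp add: ideal_gen_least is_ideal_P_span)

lemma Jid_subset_P_span: "Jid \<subseteq> P_span"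
  unfolding Jid_def by (rule ideal_gen_least[OF is_ideal_P_span]) auto

lemma is_ideal_Jid: "is_ideal Jid"
  unfolding Jid_def by (rule is_ideal_ideal_gen) (auto simp: P_span_Hc)

section \<open>Polynomial coordinates\<close>

lemma adiff_eq_3_mult:
  "adiff (3 * a) (3 * b) = 3 * adiff a b"
  by (auto simp: adiff_def nat_abs_int_diff)

definition p_poly :: "nat \<Rightarrow> 'a::field poly" where
  "p_poly k = (if 3 dvd k then 1 - chebyshev (k div 3) else 0)"

definition s_poly :: "nat \<Rightarrow> 'a::field poly" where
  "s_poly j = (if 3 dvd j then p_poly j else 1)"

lemma p_poly_eq_0: "\<not> (k > 0 \<and> 3 dvd k) \<Longrightarrow> p_poly k = 0"
  by (auto simp: p_poly_def)

lemma degree_p_poly_le: "degree (p_poly k) \<le> k div 3"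
  using chebyshev_degree_coeff[of "k div 3"]
  by (auto simp: p_poly_def intro: degree_diff_le)

lemma coeff_p_poly_nonzero:
  "(2::'a::field) \<noteq> 0 \<Longrightarrow> k > 0 \<Longrightarrow> 3 dvd k \<Longrightarrow> coeff (p_poly k :: 'a poly) (k div 3) \<noteq> 0"
  using chebyshev_degree_coeff[of "k div 3", where 'a='a] by (auto simp: p_poly_def coeff_1)

lemma p_poly_product_rule:
  assumes "3 dvd k"
  shows "smult 2 (p_poly j + p_poly k) - (p_poly (adiff j k) + p_poly (j + k))
           = smult 2 (s_poly j * p_poly k :: 'a::field poly)"
proof (cases "3 dvd j")
  case False
  with assms have "\<not> 3 dvd adiff j k" "\<not> 3 dvd (j + k)"
    unfolding adiff_def by (auto elim!: dvdE simp: nat_abs_int_diff) presburger+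
  with False show ?thesis by (simp add: p_poly_def s_poly_def algebra_simps)
next
  case True
  then obtain a b where ab: "j = 3 * a" "k = 3 * b"
    using assms by (auto elim!: dvdE)
  then have "adiff j k = 3 * adiff a b"
    by (simp add: adiff_eq_3_mult)
  with ab show ?thesis
    using chebyshev_mult_adiff[of a b, where 'a='a]
    by (simp add: p_poly_def s_poly_def algebra_simps flip: numeral_mult_conv_smult)
qed

lemma p_poly_product_rule_scaled:
  assumes "3 dvd k"
  shows "smult (2 * e) (smult z (p_poly j) + smult z (p_poly k))
           - smult e (smult z (p_poly (adiff j k)) + smult z (p_poly (j + k)))
         = smult (2 * e * z) (s_poly j * p_poly k :: 'a::field poly)"
proof -
  have "smult (2 * e) (smult z (p_poly j) + smult z (p_poly k))
           - smult e (smult z (p_poly (adiff j k)) + smult z (p_poly (j + k)))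
      = smult (e * z)
          (smult 2 (p_poly j + p_poly k) - (p_poly (adiff j k) + p_poly (j + k)) :: 'a poly)"
    by (rule poly_eqI) (simp add: algebra_simps)
  also have "\<dots> = smult (2 * e * z) (s_poly j * p_poly k)"
    by (simp add: p_poly_product_rule[OF assms] mult_ac)
  finally show ?thesis .
qed

text \<open>\<open>to_poly P1\<close> and \<open>to_poly P2\<close> are the two coordinates \<open>f\<close> and \<open>g\<close>.\<close>

definition to_poly :: "(nat \<Rightarrow> bidx) \<Rightarrow> (bidx \<Rightarrow> 'a::field) \<Rightarrow> 'a poly" where
  "to_poly sel v = (\<Sum>k | v (sel k) \<noteq> 0. smult (v (sel k)) (p_poly k))"

lemma finite_coordinates:
  assumes "sel \<in> {P1, P2}" "finite (supp v)"
  shows "finite {k. v (sel k) \<noteq> 0}"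
proof -
  have "{k. v (sel k) \<noteq> 0} = sel -` supp v"
    by (auto simp: supp_def)
  with assms show ?thesis
    by (auto intro: finite_vimageI simp: inj_def)
qed

lemma to_poly_eq_sum:
  "finite K \<Longrightarrow> {k. v (sel k) \<noteq> 0} \<subseteq> K \<Longrightarrow> to_poly sel v = (\<Sum>k\<in>K. smult (v (sel k)) (p_poly k))"
  unfolding to_poly_def by (rule sum.mono_neutral_left) auto

lemma to_poly_lincomb:
  assumes sel: "sel \<in> {P1, P2}" and F: "finite F" and f: "\<And>i. i \<in> F \<Longrightarrow> f i \<in> Hc"
  shows "to_poly sel (\<lambda>c. \<Sum>i\<in>F. a i * f i c) = (\<Sum>i\<in>F. smult (a i) (to_poly sel (f i)))"
proof -
  define K where "K = (\<Union>i\<in>F. {k. f i (sel k) \<noteq> 0})"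
  have K: "finite K"
    unfolding K_def using F f finite_coordinates[OF sel] finite_supp_Hc by blast
  have "{k. (\<Sum>i\<in>F. a i * f i (sel k)) \<noteq> 0} \<subseteq> K"
    unfolding K_def by (auto dest: sum.not_neutral_contains_not_neutral)
  then have "to_poly sel (\<lambda>c. \<Sum>i\<in>F. a i * f i c)
      = (\<Sum>k\<in>K. \<Sum>i\<in>F. smult (a i) (smult (f i (sel k)) (p_poly k)))"
    by (simp add: to_poly_eq_sum[OF K] smult_sum)
  also have "\<dots> = (\<Sum>i\<in>F. smult (a i) (\<Sum>k\<in>K. smult (f i (sel k)) (p_poly k)))"
    by (subst sum.swap) (simp add: smult_sum_right)
  also have "\<dots> = (\<Sum>i\<in>F. smult (a i) (to_poly sel (f i)))"
    by (intro sum.cong refl arg_cong[where f="smult _"] to_poly_eq_sum[symmetric] K)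
      (auto simp: K_def)
  finally show ?thesis .
qed

lemma to_poly_vadd [simp]:
  assumes "sel \<in> {P1, P2}" "u \<in> Hc" "v \<in> Hc"
  shows "to_poly sel (vadd u v) = to_poly sel u + to_poly sel v"
proof -
  define K where "K = {k. u (sel k) \<noteq> 0} \<union> {k. v (sel k) \<noteq> 0}"
  have "finite K"
    unfolding K_def using assms finite_coordinates finite_supp_Hc by blast
  then show ?thesis
    by (subst (1 2 3) to_poly_eq_sum[of K]) (auto simp: K_def vadd_def smult_add_left sum.distrib)
qed

lemma to_poly_smul [simp]:
  assumes "sel \<in> {P1, P2}" "v \<in> Hc"
  shows "to_poly sel (smul c v) = smult c (to_poly sel v)"
proof -
  define K where "K = {k. v (sel k) \<noteq> 0}"
  have "finite K"
    unfolding K_def using assms finite_coordinates finite_supp_Hc by blast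
  then show ?thesis
    by (subst (1 2) to_poly_eq_sum[of K]) (auto simp: K_def smul_def smult_sum_right)
qed

lemma to_poly_vsub [simp]:
  assumes "sel \<in> {P1, P2}" "u \<in> Hc" "v \<in> Hc"
  shows "to_poly sel (vsub u v) = to_poly sel u - to_poly sel v"
proof -
  have "vsub u v = vadd u (smul (-1) v)"
    by (simp add: vsub_def vadd_def smul_def fun_eq_iff)
  with assms show ?thesis by simp
qed

lemma to_poly_zerov [simp]: "to_poly sel zerov = 0"
  by (simp add: to_poly_def zerov_def)

lemma to_poly_ev [simp]:
  "to_poly P1 (ev (P1 k)) = p_poly k" "to_poly P1 (ev (P2 k)) = 0"
  "to_poly P2 (ev (P1 k)) = 0" "to_poly P2 (ev (P2 k)) = p_poly k"
  by (simp_all add: to_poly_def ev_def)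

text \<open>The coefficient of \<open>p\<^sub>1\<close> (for \<open>sel = P1\<close>) or \<open>p\<^sub>2\<close> (for \<open>sel = P2\<close>) in \<open>p\<^sub>r\<close>,
  using \<open>p\<^sub>0 = -p\<^sub>1 - p\<^sub>2\<close>.\<close>

definition p_coeff :: "(nat \<Rightarrow> bidx) \<Rightarrow> int \<Rightarrow> 'a::field" where
  "p_coeff sel r = (if r mod 3 = 0 then -1 else if (r mod 3 = 1) = (sel = P1) then 1 else 0)"

lemma P1_neq_P2 [simp]: "P1 \<noteq> P2" "P2 \<noteq> P1"
  by (auto simp: fun_eq_iff)

lemma to_poly_pv:
  assumes sel: "sel \<in> {P1, P2}"
  shows "to_poly sel (pv r k) = smult (p_coeff sel r) (p_poly k)"
proof (cases "k > 0 \<and> 3 dvd k")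
  case False
  then show ?thesis by (auto simp: pv_def p_poly_eq_0)
next
  case True
  have "r mod 3 = 0 \<or> r mod 3 = 1 \<or> r mod 3 = 2" by presburger
  moreover have "sel = P1 \<or> sel = P2" using sel by blast
  ultimately show ?thesis
    using True by (elim disjE) (simp_all add: pv_def p_coeff_def)
qed

lemma to_poly_zv:
  "sel \<in> {P1, P2} \<Longrightarrow>
   to_poly sel (zv r k) = smult (p_coeff sel (r + 1) - p_coeff sel (r - 1)) (p_poly k)"
  by (simp add: zv_def to_poly_pv smult_diff_left)

lemma to_poly_bm_ap:
  "sel \<in> {P1, P2} \<Longrightarrow>
   to_poly sel (bm_ap i r k) = smult (3/2 * p_coeff sel r - p_coeff sel (-(i + r))) (p_poly k)"
  by (simp add: bm_ap_def to_poly_pv smult_diff_left)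

lemma to_poly_bm_sp:
  assumes two: "(2::'a::field) \<noteq> 0" and sel: "sel \<in> {P1, P2}" and k: "3 dvd k"
  shows "to_poly sel (bm_sp j r k :: bidx \<Rightarrow> 'a) = smult (3/4 * p_coeff sel r) (s_poly j * p_poly k)"
proof -
  have half: "(3/4::'a) = 2 * (3/8)"
    using four_eight_nonzero[OF two] by (simp add: field_simps)
  show ?thesis
    using sel p_poly_product_rule_scaled[OF k, of "3/8" "p_coeff sel r" j]
    by (simp add: bm_sp_def to_poly_pv half)
qed

lemma to_poly_bm_pp:
  assumes two: "(2::'a::field) \<noteq> 0" and sel: "sel \<in> {P1, P2}" and k: "3 dvd k"
  shows "to_poly sel (bm_pp r h t k :: bidx \<Rightarrow> 'a)
    = smult (1/4 * (p_coeff sel (-(r + t) + 1) - p_coeff sel (-(r + t) - 1))) (s_poly h * p_poly k)"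
proof -
  have half: "(1/4::'a) = 2 * (1/8)"
    using four_eight_nonzero[OF two] by (simp add: field_simps)
  show ?thesis
    using sel p_poly_product_rule_scaled[OF k, of "1/8"
        "p_coeff sel (-(r + t) + 1) - p_coeff sel (-(r + t) - 1)" h]
    by (simp add: bm_pp_def to_poly_zv half)
qed

lemma to_poly_lincomb_P_span:
  assumes x: "x \<in> P_span" and sel: "sel \<in> {P1, P2}" and G: "\<And>b'. G b' \<in> Hc"
    and M: "\<And>k. k > 0 \<Longrightarrow> 3 dvd k \<Longrightarrow>
              to_poly sel (G (P1 k)) = M1 * p_poly k \<and> to_poly sel (G (P2 k)) = M2 * p_poly k"
  shows "to_poly sel (\<lambda>c. \<Sum>b'\<in>supp x. x b' * G b' c) = M1 * to_poly P1 x + M2 * to_poly P2 x"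
proof -
  define K1 where "K1 = {k. x (P1 k) \<noteq> 0}"
  define K2 where "K2 = {k. x (P2 k) \<noteq> 0}"
  have fx: "finite (supp x)"
    using x by (simp add: P_span_def Hc_def)
  then have fK: "finite K1" "finite K2"
    unfolding K1_def K2_def by (simp_all add: finite_coordinates)
  have K: "k \<in> K1 \<Longrightarrow> to_poly sel (G (P1 k)) = M1 * p_poly k"
          "k \<in> K2 \<Longrightarrow> to_poly sel (G (P2 k)) = M2 * p_poly k" for k
    using M P_span_nonzero_index[OF x, of P1 k] P_span_nonzero_index[OF x, of P2 k]
    by (auto simp: K1_def K2_def)
  have "to_poly sel (\<lambda>c. \<Sum>b'\<in>supp x. x b' * G b' c)
      = (\<Sum>b'\<in>supp x. smult (x b') (to_poly sel (G b')))"
    using sel fx G by (rule to_poly_lincomb)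
  also have "\<dots> = (\<Sum>k\<in>K1. smult (x (P1 k)) (to_poly sel (G (P1 k))))
                  + (\<Sum>k\<in>K2. smult (x (P2 k)) (to_poly sel (G (P2 k))))"
    unfolding supp_P_span[OF x] K1_def[symmetric] K2_def[symmetric]
    using fK by (subst sum.union_disjoint) (auto simp: sum.reindex inj_on_def)
  also have "\<dots> = (\<Sum>k\<in>K1. smult (x (P1 k)) (M1 * p_poly k))
                  + (\<Sum>k\<in>K2. smult (x (P2 k)) (M2 * p_poly k))"
    using K by simp
  also have "\<dots> = M1 * to_poly P1 x + M2 * to_poly P2 x"
    by (simp add: to_poly_def K1_def K2_def sum_distrib_left)
  finally show ?thesis .
qed

lemma to_poly_hmult_A:
  "x \<in> P_span \<Longrightarrow> sel \<in> {P1, P2} \<Longrightarrow> to_poly sel (hmult (av i) x) =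
     [:3/2 * p_coeff sel 1 - p_coeff sel (-(i + 1)):] * to_poly P1 x
     + [:3/2 * p_coeff sel 2 - p_coeff sel (-(i + 2)):] * to_poly P2 x"
  unfolding hmult_ev_left av_def by (rule to_poly_lincomb_P_span) (auto simp: to_poly_bm_ap)

lemma to_poly_hmult_S:
  "(2::'a::field) \<noteq> 0 \<Longrightarrow> x \<in> P_span \<Longrightarrow> sel \<in> {P1, P2} \<Longrightarrow>
   to_poly sel (hmult (ev (S j)) (x :: bidx \<Rightarrow> 'a)) =
     smult (3/4 * p_coeff sel 1) (s_poly j) * to_poly P1 x
     + smult (3/4 * p_coeff sel 2) (s_poly j) * to_poly P2 x"
  unfolding hmult_ev_left by (rule to_poly_lincomb_P_span) (auto simp: to_poly_bm_sp)

lemma to_poly_hmult_ev: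
  assumes "(2::'a::field) \<noteq> 0" "x \<in> P_span" "sel \<in> {P1, P2}"
  obtains M1 M2
    where "to_poly sel (hmult (ev b) (x :: bidx \<Rightarrow> 'a)) = M1 * to_poly P1 x + M2 * to_poly P2 x"
proof (cases b)
  case (A i)
  then show ?thesis using that to_poly_hmult_A[OF assms(2,3), of i] unfolding av_def by blast
next
  case (S j)
  then show ?thesis using that to_poly_hmult_S[OF assms] by blast
next
  case (P1 h)
  let ?m = "\<lambda>t. smult (1/4 * (p_coeff sel (-(1 + t) + 1) - p_coeff sel (-(1 + t) - 1))) (s_poly h)"
  have "to_poly sel (hmult (ev b) x) = ?m 1 * to_poly P1 x + ?m 2 * to_poly P2 x"
    unfolding P1 hmult_ev_left
    by (rule to_poly_lincomb_P_span) (use assms in \<open>auto simp: to_poly_bm_pp\<close>)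
  then show ?thesis by (rule that)
next
  case (P2 h)
  let ?m = "\<lambda>t. smult (1/4 * (p_coeff sel (-(2 + t) + 1) - p_coeff sel (-(2 + t) - 1))) (s_poly h)"
  have "to_poly sel (hmult (ev b) x) = ?m 1 * to_poly P1 x + ?m 2 * to_poly P2 x"
    unfolding P2 hmult_ev_left
    by (rule to_poly_lincomb_P_span) (use assms in \<open>auto simp: to_poly_bm_pp\<close>)
  then show ?thesis by (rule that)
qed

lemma degree_to_poly:
  assumes two: "(2::'a::field) \<noteq> 0" and x: "x \<in> P_span" and sel: "sel \<in> {P1, P2}"
    and top: "x (sel n) \<noteq> 0" and above: "\<And>k. k > n \<Longrightarrow> x (sel k) = 0"
  shows "to_poly sel (x :: bidx \<Rightarrow> 'a) \<noteq> 0 \<and> 3 * degree (to_poly sel x) = n"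
proof -
  define K where "K = {k. x (sel k) \<noteq> 0}"
  have fK: "finite K"
    unfolding K_def using x sel by (simp add: finite_coordinates P_span_def Hc_def)
  have nK: "n \<in> K"
    using top by (simp add: K_def)
  have valid: "k \<in> K \<Longrightarrow> k > 0 \<and> 3 dvd k" for k
    using P_span_nonzero_index[OF x sel] by (simp add: K_def)
  have le: "k \<in> K \<Longrightarrow> k \<le> n" for k
    using above[of k] by (force simp: K_def)
  have "coeff (to_poly sel x) (n div 3) = (\<Sum>k\<in>K. x (sel k) * coeff (p_poly k) (n div 3))"
    by (simp add: to_poly_def K_def coeff_sum)
  also have "\<dots> = x (sel n) * coeff (p_poly n) (n div 3)"
  proof -
    have "x (sel k) * coeff (p_poly k) (n div 3) = 0" if k: "k \<in> K - {n}" for k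
    proof -
      have "k < n" "3 dvd k" "3 dvd n"
        using k le[of k] valid[of k] valid[OF nK] by auto
      then have "k div 3 < n div 3"
        by (auto elim!: dvdE)
      then show ?thesis
        using degree_p_poly_le[of k, where 'a='a] by (simp add: coeff_eq_0)
    qed
    then have "(\<Sum>k\<in>K - {n}. x (sel k) * coeff (p_poly k) (n div 3)) = 0"
      by (rule sum.neutral[OF ballI])
    then show ?thesis
      using sum.remove[OF fK nK, of "\<lambda>k. x (sel k) * coeff (p_poly k) (n div 3)"] by simp
  qed
  also have "\<dots> \<noteq> 0"
    using top coeff_p_poly_nonzero[OF two] valid[OF nK] by simp
  finally have lead: "coeff (to_poly sel x) (n div 3) \<noteq> 0" .
  have "degree (to_poly sel x) \<le> n div 3"
    unfolding to_poly_def K_def[symmetric]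
  proof (rule degree_sum_le[OF fK])
    fix k assume "k \<in> K"
    then have "degree (p_poly k :: 'a poly) \<le> n div 3"
      using degree_p_poly_le[of k, where 'a='a] le[of k] div_le_mono[of k n 3] by linarith
    then show "degree (smult (x (sel k)) (p_poly k)) \<le> n div 3"
      using degree_smult_le le_trans by blast
  qed
  with lead have "degree (to_poly sel x) = n div 3"
    by (simp add: le_antisym le_degree)
  with lead valid[OF nK] show ?thesis
    by auto
qed

lemma P_span_top_index:
  assumes x: "x \<in> P_span" and sel: "sel \<in> {P1, P2}" and k: "x (sel k) \<noteq> 0"
  obtains n where "x (sel n) \<noteq> 0" "\<And>k. k > n \<Longrightarrow> x (sel k) = 0"
proof -
  define K where "K = {k. x (sel k) \<noteq> 0}"
  have "finite K" "K \<noteq> {}"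
    unfolding K_def using x sel k by (auto simp: finite_coordinates P_span_def Hc_def)
  then have "Max K \<in> K" "\<And>k. k \<in> K \<Longrightarrow> k \<le> Max K"
    by simp_all
  then show ?thesis
    by (intro that) (auto simp: K_def not_le[symmetric])
qed

lemma to_poly_eq_0_iff:
  assumes "(2::'a::field) \<noteq> 0" "x \<in> P_span" "sel \<in> {P1, P2}"
  shows "to_poly sel (x :: bidx \<Rightarrow> 'a) = 0 \<longleftrightarrow> (\<forall>k. x (sel k) = 0)"
proof
  assume zero: "to_poly sel x = 0"
  show "\<forall>k. x (sel k) = 0"
  proof (rule ccontr)
    assume "\<not> (\<forall>k. x (sel k) = 0)"
    then obtain n where "x (sel n) \<noteq> 0" "\<And>k. k > n \<Longrightarrow> x (sel k) = 0"
      using P_span_top_index[OF assms(2,3)] by blast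
    with zero show False
      using degree_to_poly[OF assms] by blast
  qed
qed (simp add: to_poly_def)

lemma to_poly_top_index:
  assumes "(2::'a::field) \<noteq> 0" "x \<in> P_span" "sel \<in> {P1, P2}" "to_poly sel (x :: bidx \<Rightarrow> 'a) \<noteq> 0"
  shows "x (sel (3 * degree (to_poly sel x))) \<noteq> 0"
    and "\<And>k. k > 3 * degree (to_poly sel x) \<Longrightarrow> x (sel k) = 0"
proof -
  obtain k where "x (sel k) \<noteq> 0"
    using assms to_poly_eq_0_iff by blast
  then obtain n where n: "x (sel n) \<noteq> 0" "\<And>k. k > n \<Longrightarrow> x (sel k) = 0"
    using P_span_top_index[OF assms(2,3)] by blast
  moreover have "3 * degree (to_poly sel x) = n"
    using degree_to_poly[OF assms(1-3) n] by simp
  ultimately show "x (sel (3 * degree (to_poly sel x))) \<noteq> 0"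
    and "\<And>k. k > 3 * degree (to_poly sel x) \<Longrightarrow> x (sel k) = 0"
    by simp_all
qed

lemma to_poly_inject:
  assumes two: "(2::'a::field) \<noteq> 0" and x: "x \<in> P_span" and y: "y \<in> P_span"
    and "to_poly P1 x = to_poly P1 (y :: bidx \<Rightarrow> 'a)" "to_poly P2 x = to_poly P2 y"
  shows "x = y"
proof (rule P_span_eqI[OF x y])
  have "to_poly sel (vsub x y) = 0" if "sel \<in> {P1, P2}" for sel
    using assms that by (auto simp: P_span_Hc)
  then have "\<forall>k. vsub x y (P1 k) = 0" "\<forall>k. vsub x y (P2 k) = 0"
    using to_poly_eq_0_iff[OF two P_span_closed(2)[OF x y]] by auto
  then show "x (P1 k) = y (P1 k)" "x (P2 k) = y (P2 k)" for k
    by (simp_all add: vsub_def)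
qed

lemma to_poly_nonzero:
  "(2::'a::field) \<noteq> 0 \<Longrightarrow> x \<in> P_span \<Longrightarrow> x \<noteq> zerov \<Longrightarrow> to_poly P1 (x :: bidx \<Rightarrow> 'a) \<noteq> 0 \<or> to_poly P2 x \<noteq> 0"
  using to_poly_inject[of x zerov] by auto

section \<open>Ideals inside \<open>J\<close> are polynomial ideals\<close>

definition poly_multiple_ideal :: "'a::field poly \<Rightarrow> (bidx \<Rightarrow> 'a) set" where
  "poly_multiple_ideal g = {x \<in> P_span. g dvd to_poly P1 x \<and> g dvd to_poly P2 x}"

lemma is_ideal_poly_multiple_ideal:
  assumes two: "(2::'a::field) \<noteq> 0"
  shows "is_ideal (poly_multiple_ideal (g :: 'a poly))"
proof (rule is_idealI)
  fix b and x :: "bidx \<Rightarrow> 'a"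
  assume x: "x \<in> poly_multiple_ideal g"
  then have xP: "x \<in> P_span"
    by (simp add: poly_multiple_ideal_def)
  have "g dvd to_poly sel (hmult (ev b) x)" if sel: "sel \<in> {P1, P2}" for sel
  proof -
    obtain M1 M2 where "to_poly sel (hmult (ev b) x) = M1 * to_poly P1 x + M2 * to_poly P2 x"
      using to_poly_hmult_ev[OF two xP sel] .
    with x show ?thesis
      by (simp add: poly_multiple_ideal_def)
  qed
  with xP show "hmult (ev b) x \<in> poly_multiple_ideal g"
    by (simp add: poly_multiple_ideal_def hmult_ev_P_span)
qed (auto simp: poly_multiple_ideal_def P_span_Hc dvd_smult)

text \<open>On coordinates \<open>(f, g)\<close>, \<open>a1_op\<close> acts as \<open>(g, 2g)\<close> and \<open>a2_op\<close> as \<open>(2f, f)\<close>, so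
  \<open>a1_op \<circ> a2_op\<close> acts as \<open>(f, 2f)\<close>; the combinations below give \<open>(f, 0)\<close> and \<open>(0, f)\<close>.
  Since \<open>s\<^sub>3\<close> acts as \<open>(3/4)(1 - x)\<close>, \<open>times_x\<close> multiplies both coordinates by \<open>x\<close>.\<close>

definition a1_op :: "(bidx \<Rightarrow> 'a::field) \<Rightarrow> bidx \<Rightarrow> 'a" where
  "a1_op y = vsub (hmult (av 1) y) (smul (1/2) y)"

definition a2_op :: "(bidx \<Rightarrow> 'a::field) \<Rightarrow> bidx \<Rightarrow> 'a" where
  "a2_op y = vsub (hmult (av 2) y) (smul (1/2) y)"

definition first_part :: "(bidx \<Rightarrow> 'a::field) \<Rightarrow> bidx \<Rightarrow> 'a" where
  "first_part y = smul (1/3) (vsub (smul 2 (a2_op y)) (a1_op (a2_op y)))"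

definition first_to_second :: "(bidx \<Rightarrow> 'a::field) \<Rightarrow> bidx \<Rightarrow> 'a" where
  "first_to_second y = smul (1/3) (vsub (smul 2 (a1_op (a2_op y))) (a2_op y))"

definition times_x :: "(bidx \<Rightarrow> 'a::field) \<Rightarrow> bidx \<Rightarrow> 'a" where
  "times_x y = vsub y (smul (4/3) (hmult (sv 3) y))"

lemma ideal_closed_ops:
  assumes I: "is_ideal I" and y: "y \<in> I"
  shows "a1_op y \<in> I" "a2_op y \<in> I" "first_part y \<in> I" "first_to_second y \<in> I" "times_x y \<in> I"
proof -
  have closed: "z \<in> I \<Longrightarrow> smul c z \<in> I" "z \<in> I \<Longrightarrow> w \<in> Hc \<Longrightarrow> hmult w z \<in> I" for c z w
    using I by (simp_all add: is_ideal_def)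
  have a: "a1_op z \<in> I" "a2_op z \<in> I" if "z \<in> I" for z
    unfolding a1_op_def a2_op_def using that by (auto intro!: ideal_vsub[OF I] closed)
  show "a1_op y \<in> I" "a2_op y \<in> I" "first_part y \<in> I" "first_to_second y \<in> I" "times_x y \<in> I"
    unfolding first_part_def first_to_second_def times_x_def
    using y by (auto intro!: a ideal_vsub[OF I] closed)
qed

lemmas P_span_closed_ops = ideal_closed_ops[OF is_ideal_P_span]

lemma to_poly_a1_op:
  assumes two: "(2::'a::field) \<noteq> 0" and y: "y \<in> P_span"
  shows "to_poly P1 (a1_op (y :: bidx \<Rightarrow> 'a)) = to_poly P2 y"
    and "to_poly P2 (a1_op y) = smult 2 (to_poly P2 y)"
  using y hmult_ev_P_span[OF y, of "A 1"] to_poly_hmult_A[OF y, of _ 1]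
  by (simp_all add: a1_op_def av_def P_span_Hc p_coeff_def flip: smult_diff_left)
    (auto intro!: poly_eqI simp: two four_eight_nonzero[OF two] field_simps)

lemma to_poly_a2_op:
  assumes two: "(2::'a::field) \<noteq> 0" and y: "y \<in> P_span"
  shows "to_poly P1 (a2_op (y :: bidx \<Rightarrow> 'a)) = smult 2 (to_poly P1 y)"
    and "to_poly P2 (a2_op y) = to_poly P1 y"
  using y hmult_ev_P_span[OF y, of "A 2"] to_poly_hmult_A[OF y, of _ 2]
  by (simp_all add: a2_op_def av_def P_span_Hc p_coeff_def flip: smult_diff_left)
    (auto intro!: poly_eqI simp: two four_eight_nonzero[OF two] field_simps)

lemma to_poly_a1_a2_op:
  assumes two: "(2::'a::field) \<noteq> 0" and y: "y \<in> P_span"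
  shows "to_poly P1 (a1_op (a2_op (y :: bidx \<Rightarrow> 'a))) = to_poly P1 y"
    and "to_poly P2 (a1_op (a2_op y)) = smult 2 (to_poly P1 y)"
  using to_poly_a1_op[OF two P_span_closed_ops(2)[OF y]] to_poly_a2_op[OF two y] by simp_all

lemma to_poly_first_part:
  assumes two: "(2::'a::field) \<noteq> 0" and three: "(3::'a) \<noteq> 0" and y: "y \<in> P_span"
  shows "to_poly P1 (first_part (y :: bidx \<Rightarrow> 'a)) = to_poly P1 y"
    and "to_poly P2 (first_part y) = 0"
  using y P_span_closed_ops[OF y] P_span_closed_ops[OF P_span_closed_ops(2)[OF y]]
    to_poly_a1_a2_op[OF two y] to_poly_a2_op[OF two y]
  by (simp_all add: first_part_def P_span_Hc flip: smult_diff_left)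
    (auto intro!: poly_eqI simp: three field_simps)

lemma to_poly_first_to_second:
  assumes two: "(2::'a::field) \<noteq> 0" and three: "(3::'a) \<noteq> 0" and y: "y \<in> P_span"
  shows "to_poly P1 (first_to_second (y :: bidx \<Rightarrow> 'a)) = 0"
    and "to_poly P2 (first_to_second y) = to_poly P1 y"
  using y P_span_closed_ops[OF y] P_span_closed_ops[OF P_span_closed_ops(2)[OF y]]
    to_poly_a1_a2_op[OF two y] to_poly_a2_op[OF two y]
  by (simp_all add: first_to_second_def P_span_Hc flip: smult_diff_left)
    (auto intro!: poly_eqI simp: three field_simps)

lemma to_poly_times_x:
  assumes two: "(2::'a::field) \<noteq> 0" and three: "(3::'a) \<noteq> 0" and y: "y \<in> P_span"
    and sel: "sel \<in> {P1, P2}"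
  shows "to_poly sel (times_x (y :: bidx \<Rightarrow> 'a)) = [:0, 1:] * to_poly sel y"
proof -
  have s3: "s_poly 3 = (1 - [:0, 1:] :: 'a poly)"
    by (simp add: s_poly_def p_poly_def)
  have inverse: "(4/3) * (3/4::'a) = 1"
  proof -
    have "(4::'a) * 3 \<noteq> 0"
      using three four_eight_nonzero[OF two] by (simp only: mult_eq_0_iff) simp
    then show ?thesis by simp
  qed
  have "to_poly sel (hmult (sv 3) y) = smult (3/4) (s_poly 3 * to_poly sel y)"
    using sel to_poly_hmult_S[OF two y sel, of 3] by (auto simp: sv_def p_coeff_def)
  then have "to_poly sel (times_x y)
      = to_poly sel y - smult ((4/3) * (3/4)) (s_poly 3 * to_poly sel y)"
    using y sel hmult_ev_P_span[OF y, of "S 3"] by (simp add: times_x_def sv_def P_span_Hc)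
  also have "\<dots> = to_poly sel y - (1 - [:0, 1:]) * to_poly sel y"
    by (simp only: inverse s3 smult_1_left)
  also have "\<dots> = [:0, 1:] * to_poly sel y"
    by (simp add: algebra_simps del: mult_pCons_left mult_pCons_right)
  finally show ?thesis .
qed

lemma ideal_poly_multiple:
  assumes two: "(2::'a::field) \<noteq> 0" and three: "(3::'a) \<noteq> 0"
    and I: "is_ideal I" "I \<subseteq> P_span" and y: "(y :: bidx \<Rightarrow> 'a) \<in> I"
  shows "\<exists>z\<in>I. to_poly P1 z = q * to_poly P1 y \<and> to_poly P2 z = q * to_poly P2 y"
proof (induction q)
  case 0
  show ?case
    using I by (intro bexI[of _ zerov]) (simp_all add: is_ideal_def)
next
  case (pCons a p)
  then obtain z where z: "z \<in> I" "to_poly P1 z = p * to_poly P1 y" "to_poly P2 z = p * to_poly P2 y"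
    by blast
  have zy: "z \<in> P_span" "y \<in> P_span"
    using I z y by auto
  then have "to_poly sel (vadd (smul a y) (times_x z)) = pCons a p * to_poly sel y"
    if "sel \<in> {P1, P2}" "to_poly sel z = p * to_poly sel y" for sel
    using that P_span_closed_ops(5)[OF zy(1)]
    by (simp add: P_span_Hc to_poly_times_x[OF two three] algebra_simps)
  moreover have "vadd (smul a y) (times_x z) \<in> I"
    using I y ideal_closed_ops(5)[OF I(1) z(1)] by (simp add: is_ideal_def)
  ultimately show ?case
    using z by blast
qed

lemma ideal_gen_eq_poly_multiple_ideal:
  assumes two: "(2::'a::field) \<noteq> 0" and three: "(3::'a) \<noteq> 0"
    and x: "x \<in> P_span" and x2: "to_poly P2 (x :: bidx \<Rightarrow> 'a) = 0"
  shows "ideal_gen {x} = poly_multiple_ideal (to_poly P1 x)"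
proof
  show "ideal_gen {x} \<subseteq> poly_multiple_ideal (to_poly P1 x)"
    using x x2 by (intro ideal_gen_least is_ideal_poly_multiple_ideal[OF two])
      (simp add: poly_multiple_ideal_def)
next
  define G where "G = ideal_gen {x}"
  have G: "is_ideal G" "G \<subseteq> P_span" "x \<in> G"
    unfolding G_def using x ideal_gen_base[of "{x}"]
    by (simp_all add: P_span_Hc is_ideal_ideal_gen ideal_gen_singleton_subset_P_span)
  show "poly_multiple_ideal (to_poly P1 x) \<subseteq> G"
  proof
    fix y assume "y \<in> poly_multiple_ideal (to_poly P1 x)"
    then have y: "y \<in> P_span" "to_poly P1 x dvd to_poly P1 y" "to_poly P1 x dvd to_poly P2 y"
      by (simp_all add: poly_multiple_ideal_def)
    then obtain q1 q2 where q: "to_poly P1 y = q1 * to_poly P1 x" "to_poly P2 y = q2 * to_poly P1 x"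
      by (metis dvdE mult.commute)
    obtain z1 where z1: "z1 \<in> G" "to_poly P1 z1 = q1 * to_poly P1 x" "to_poly P2 z1 = 0"
      using ideal_poly_multiple[OF two three G, of q1] x2 by auto
    obtain z2 where z2: "z2 \<in> G" "to_poly P1 z2 = q2 * to_poly P1 x"
      using ideal_poly_multiple[OF two three G, of q2] by auto
    have P_span: "z1 \<in> P_span" "first_to_second z2 \<in> P_span"
      using G(2) z1 z2 P_span_closed_ops(4) by auto
    define g where "g = vadd z1 (first_to_second z2)"
    have "g \<in> G"
      unfolding g_def using G z1 z2 ideal_closed_ops(4)[OF G(1) z2(1)] by (simp add: is_ideal_def)
    moreover have "to_poly P1 g = to_poly P1 y" "to_poly P2 g = to_poly P2 y"
      using P_span z1 z2 q G(2)
      by (simp_all add: g_def P_span_Hc to_poly_first_to_second[OF two three] subsetD)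
    then have "g = y"
      using P_span y(1) by (intro to_poly_inject[OF two]) (simp_all add: g_def)
    ultimately show "y \<in> G" by simp
  qed
qed

section \<open>Elements of minimal \<open>J\<close>-degree\<close>

text \<open>\<open>J_degree\<close> takes values in \<open>\<nat>/4\<close>; its numerator is well-ordered.\<close>

definition J_degree4 :: "(bidx \<Rightarrow> 'a::field) \<Rightarrow> nat" where
  "J_degree4 x = 4 * p_level x + (if x (P1 (p_level x)) \<noteq> 0 then 1 else 0)
                                + (if x (P2 (p_level x)) \<noteq> 0 then 2 else 0)"

lemma J_degree_eq: "J_degree x = real (J_degree4 x) / 4"
  by (simp add: J_degree_def J_degree4_def field_simps)

lemma finite_p_levels: "x \<in> P_span \<Longrightarrow> finite {k. x (P1 k) \<noteq> 0 \<or> x (P2 k) \<noteq> 0}"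
proof -
  have "{k. x (P1 k) \<noteq> 0 \<or> x (P2 k) \<noteq> 0} = {k. x (P1 k) \<noteq> 0} \<union> {k. x (P2 k) \<noteq> 0}"
    by auto
  then show "x \<in> P_span \<Longrightarrow> ?thesis"
    by (simp add: finite_coordinates finite_supp_Hc P_span_Hc)
qed

lemma J_degree4_first:
  assumes two: "(2::'a::field) \<noteq> 0" and x: "x \<in> P_span"
    and x2: "to_poly P2 (x :: bidx \<Rightarrow> 'a) = 0" and x1: "to_poly P1 x \<noteq> 0"
  shows "J_degree4 x = 12 * degree (to_poly P1 x) + 1"
proof -
  let ?n = "3 * degree (to_poly P1 x)"
  have P1: "x (P1 ?n) \<noteq> 0" "\<And>k. k > ?n \<Longrightarrow> x (P1 k) = 0"
    using to_poly_top_index[OF two x _ x1] by simp_all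
  have P2: "x (P2 k) = 0" for k
    using to_poly_eq_0_iff[OF two x, of P2] x2 by simp
  have "p_level x = ?n"
    unfolding p_level_def using P1 P2 finite_p_levels[OF x] by (intro Max_eqI) (auto intro: leI)
  with P1 P2 show ?thesis
    by (simp add: J_degree4_def)
qed

lemma J_degree4_second:
  assumes two: "(2::'a::field) \<noteq> 0" and x: "x \<in> P_span" and x2: "to_poly P2 (x :: bidx \<Rightarrow> 'a) \<noteq> 0"
  shows "J_degree4 x \<ge> 12 * degree (to_poly P2 x) + 2"
proof -
  let ?n = "3 * degree (to_poly P2 x)"
  have top: "x (P2 ?n) \<noteq> 0"
    using to_poly_top_index[OF two x _ x2] by simp
  have "?n \<le> p_level x"
    unfolding p_level_def using top finite_p_levels[OF x] by (intro Max_ge) auto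
  then consider "p_level x = ?n" | "p_level x \<ge> ?n + 1"
    by linarith
  then show ?thesis
    using top by cases (auto simp: J_degree4_def)
qed

definition min_J_degree :: "(bidx \<Rightarrow> 'a::field) set \<Rightarrow> (bidx \<Rightarrow> 'a) \<Rightarrow> bool" where
  "min_J_degree I x \<longleftrightarrow> x \<in> I \<and> x \<noteq> zerov \<and> (\<forall>y\<in>I. y \<noteq> zerov \<longrightarrow> J_degree x \<le> J_degree y)"

lemma min_J_degree_exists:
  assumes "y \<in> I" "y \<noteq> zerov"
  obtains x where "min_J_degree I x"
proof -
  obtain x where "x \<in> I \<and> x \<noteq> zerov" "\<And>y. y \<in> I \<and> y \<noteq> zerov \<Longrightarrow> J_degree4 x \<le> J_degree4 y"
    using ex_has_least_nat[of "\<lambda>y. y \<in> I \<and> y \<noteq> zerov" y J_degree4] assms by blast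
  then have "min_J_degree I x"
    by (simp add: min_J_degree_def J_degree_eq)
  then show ?thesis by (rule that)
qed

lemma min_J_degree_le:
  "min_J_degree I x \<Longrightarrow> y \<in> I \<Longrightarrow> y \<noteq> zerov \<Longrightarrow> J_degree4 x \<le> J_degree4 y"
  by (simp add: min_J_degree_def J_degree_eq)

lemma min_J_degree_to_poly:
  assumes two: "(2::'a::field) \<noteq> 0" and three: "(3::'a) \<noteq> 0"
    and I: "is_ideal I" "I \<subseteq> P_span" and x: "min_J_degree I (x :: bidx \<Rightarrow> 'a)"
  shows "to_poly P2 x = 0" and "to_poly P1 x \<noteq> 0"
proof -
  have xI: "x \<in> I" and xP: "x \<in> P_span" and nz: "x \<noteq> zerov"
    using x I by (auto simp: min_J_degree_def)
  show x2: "to_poly P2 x = 0"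
  proof (rule ccontr)
    \<comment> \<open>otherwise moving the second coordinate into the first lowers the \<open>J\<close>-degree\<close>
    assume x2: "to_poly P2 x \<noteq> 0"
    define z where "z = first_part (a1_op x)"
    have zI: "z \<in> I"
      unfolding z_def by (intro ideal_closed_ops[OF I(1)] xI)
    have "to_poly P1 z = to_poly P2 x" "to_poly P2 z = 0"
      unfolding z_def using P_span_closed_ops(1)[OF xP]
      by (simp_all add: to_poly_first_part[OF two three] to_poly_a1_op[OF two xP])
    then have "J_degree4 z = 12 * degree (to_poly P2 x) + 1" "z \<noteq> zerov"
      using J_degree4_first[OF two, of z] zI I(2) x2 by auto
    with J_degree4_second[OF two xP x2] min_J_degree_le[OF x zI] show False
      by simp
  qed
  show "to_poly P1 x \<noteq> 0"
    using to_poly_nonzero[OF two xP nz] x2 by simp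
qed

lemma min_J_degree_dvd:
  assumes two: "(2::'a::field) \<noteq> 0" and three: "(3::'a) \<noteq> 0"
    and I: "is_ideal I" "I \<subseteq> P_span" and x: "min_J_degree I (x :: bidx \<Rightarrow> 'a)"
    and w: "w \<in> I" "to_poly P2 w = 0"
  shows "to_poly P1 x dvd to_poly P1 w"
proof -
  have xI: "x \<in> I"
    using x by (simp add: min_J_degree_def)
  note x12 = min_J_degree_to_poly[OF two three I x]
  \<comment> \<open>the remainder of the division is realised in \<open>I\<close> and would have smaller \<open>J\<close>-degree\<close>
  define r where "r = to_poly P1 w mod to_poly P1 x"
  obtain z where z: "z \<in> I" "to_poly P1 z = (to_poly P1 w div to_poly P1 x) * to_poly P1 x"
      "to_poly P2 z = 0"
    using ideal_poly_multiple[OF two three I xI] x12(1) by auto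
  define v where "v = vsub w z"
  have vI: "v \<in> I"
    unfolding v_def using I(1) w z by (simp add: ideal_vsub)
  have "to_poly P1 v = r" "to_poly P2 v = 0"
    unfolding v_def r_def using I(2) w z by (auto simp: P_span_Hc minus_div_mult_eq_mod subsetD)
  have "r = 0"
  proof (rule ccontr)
    assume r: "r \<noteq> 0"
    then have "J_degree4 v = 12 * degree r + 1" "v \<noteq> zerov"
      using J_degree4_first[OF two, of v] vI I(2) \<open>to_poly P1 v = r\<close> \<open>to_poly P2 v = 0\<close> by auto
    moreover have "degree r < degree (to_poly P1 x)"
      unfolding r_def using r r_def degree_mod_less'[OF x12(2)] by simp
    ultimately show False
      using J_degree4_first[OF two _ x12] min_J_degree_le[OF x vI] xI I(2) by auto
  qed
  then show ?thesis
    by (simp add: r_def mod_eq_0_iff_dvd)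
qed

lemma min_J_degree_generates:
  assumes two: "(2::'a::field) \<noteq> 0" and three: "(3::'a) \<noteq> 0"
    and I: "is_ideal I" "I \<subseteq> P_span" and x: "min_J_degree I (x :: bidx \<Rightarrow> 'a)"
  shows "I = ideal_gen {x}"
proof
  have xI: "x \<in> I"
    using x by (simp add: min_J_degree_def)
  then show "ideal_gen {x} \<subseteq> I"
    by (simp add: ideal_gen_least I(1))
  show "I \<subseteq> ideal_gen {x}"
  proof
    fix y assume yI: "y \<in> I"
    then have yP: "y \<in> P_span"
      using I(2) by auto
    have "first_part y \<in> I" "first_part (a1_op y) \<in> I"
      using yI by (simp_all add: ideal_closed_ops[OF I(1)])
    moreover have "to_poly P1 (first_part y) = to_poly P1 y" "to_poly P2 (first_part y) = 0"
      "to_poly P1 (first_part (a1_op y)) = to_poly P2 y" "to_poly P2 (first_part (a1_op y)) = 0"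
      using P_span_closed_ops(1)[OF yP]
      by (simp_all add: to_poly_first_part[OF two three] to_poly_a1_op[OF two] yP)
    ultimately have "to_poly P1 x dvd to_poly P1 y" "to_poly P1 x dvd to_poly P2 y"
      using min_J_degree_dvd[OF two three I x] by metis+
    with yP show "y \<in> ideal_gen {x}"
      using ideal_gen_eq_poly_multiple_ideal[OF two three _ min_J_degree_to_poly(1)[OF two three I x]]
        xI I(2)
      by (auto simp: poly_multiple_ideal_def)
  qed
qed

section \<open>Tuples\<close>

lemma tuple_elt_P1: "j < length \<beta> \<Longrightarrow> tuple_elt \<beta> (P1 (3 * (j + 1))) = \<beta> ! j"
  unfolding tuple_elt_def ev_def by (simp add: if_distrib[of "(*) _"] cong: if_cong)

lemma tuple_elt_eq_0: "(\<And>j. j < length \<beta> \<Longrightarrow> c \<noteq> P1 (3 * (j + 1))) \<Longrightarrow> tuple_elt \<beta> c = 0"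
  unfolding tuple_elt_def ev_def by (intro sum.neutral) auto

lemma tuple_elt_P_span: "tuple_elt \<beta> \<in> P_span"
proof -
  have "supp (tuple_elt \<beta>) \<subseteq> (\<lambda>j. P1 (3 * (j + 1))) ` {..<length \<beta>}"
    using tuple_elt_eq_0[of \<beta>] by (auto simp: supp_def)
  then show ?thesis
    by (auto simp: P_span_def Hc_def intro: finite_subset)
qed

lemma to_poly_P2_tuple_elt: "to_poly P2 (tuple_elt \<beta>) = 0"
  by (simp add: to_poly_def tuple_elt_eq_0)

lemma last_tuple_elt: "valid_tuple \<beta> \<Longrightarrow> tuple_elt \<beta> (P1 (3 * length \<beta>)) = last \<beta>"
  using tuple_elt_P1[of "length \<beta> - 1" \<beta>] by (simp add: valid_tuple_def last_conv_nth)

lemma tuple_elt_nonzero: "valid_tuple \<beta> \<Longrightarrow> tuple_elt \<beta> \<noteq> zerov"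
  using last_tuple_elt[of \<beta>] by (auto simp: valid_tuple_def zerov_def)

lemma tuple_elt_map_mult: "tuple_elt (map (\<lambda>b. c * b) \<beta>) = smul c (tuple_elt \<beta>)"
  by (simp add: tuple_elt_def smul_def sum_distrib_left mult.assoc fun_eq_iff)

lemma tuple_elt_inject:
  assumes "valid_tuple \<beta>" "valid_tuple \<gamma>" "tuple_elt \<beta> = tuple_elt \<gamma>"
  shows "\<beta> = \<gamma>"
proof -
  have "length \<gamma> \<le> length \<beta>"
    if "valid_tuple \<gamma>" "tuple_elt \<beta> = tuple_elt \<gamma>" for \<beta> \<gamma> :: "'a list"
  proof (rule ccontr)
    assume "\<not> length \<gamma> \<le> length \<beta>"
    then have "tuple_elt \<beta> (P1 (3 * length \<gamma>)) = 0"
      by (intro tuple_elt_eq_0) auto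
    with that show False
      using last_tuple_elt[of \<gamma>] by (simp add: valid_tuple_def)
  qed
  with assms have "length \<beta> = length \<gamma>"
    by (metis le_antisym)
  then show ?thesis
    using assms(3) tuple_elt_P1[of _ \<beta>] tuple_elt_P1[of _ \<gamma>] by (metis nth_equalityI)
qed

lemma P_span_eq_tuple_elt:
  assumes x: "x \<in> P_span" and x2: "\<And>k. x (P2 k) = 0" and nz: "x \<noteq> zerov"
  shows "\<exists>\<beta>. valid_tuple \<beta> \<and> x = tuple_elt \<beta>"
proof -
  obtain c where c: "x c \<noteq> 0"
    using nz by (auto simp: zerov_def)
  then have "c \<in> range P1 \<union> range P2"
    using P_span_outside[OF x] by blast
  with c x2 obtain k where "x (P1 k) \<noteq> 0"
    by auto
  then obtain n where n: "x (P1 n) \<noteq> 0" "\<And>k. k > n \<Longrightarrow> x (P1 k) = 0"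
    using P_span_top_index[OF x] by blast
  moreover have "n > 0" "3 dvd n"
    using P_span_nonzero_index[OF x, of P1 n] n(1) by simp_all
  ultimately obtain d where d: "n = 3 * d" "d > 0"
    by (auto elim!: dvdE)
  define \<beta> where "\<beta> = map (\<lambda>j. x (P1 (3 * (j + 1)))) [0..<d]"
  have "last \<beta> = x (P1 n)"
    using d by (cases d) (simp_all add: \<beta>_def last_map)
  with n d have "valid_tuple \<beta>"
    by (simp add: valid_tuple_def \<beta>_def)
  moreover have "x = tuple_elt \<beta>"
  proof (rule P_span_eqI[OF x tuple_elt_P_span])
    show "x (P2 k) = tuple_elt \<beta> (P2 k)" for k
      by (simp add: x2 tuple_elt_eq_0)
    show "x (P1 k) = tuple_elt \<beta> (P1 k)" for k
    proof (cases "\<exists>j < d. k = 3 * (j + 1)")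
      case True
      then obtain j where "j < d" "k = 3 * (j + 1)"
        by blast
      then show ?thesis
        using tuple_elt_P1[of j \<beta>] by (simp add: \<beta>_def)
    next
      case False
      have "x (P1 k) = 0"
      proof (rule ccontr)
        assume "x (P1 k) \<noteq> 0"
        then have "k \<le> 3 * d" "k > 0" "3 dvd k"
          using n(2)[of k] P_span_nonzero_index[OF x, of P1 k] d(1) not_le by auto
        then obtain m where "k = 3 * m" "0 < m" "m \<le> d"
          by (auto elim!: dvdE)
        then have "m - 1 < d \<and> k = 3 * (m - 1 + 1)"
          by simp
        with False show False
          by blast
      qed
      moreover have "tuple_elt \<beta> (P1 k) = 0"
        by (rule tuple_elt_eq_0) (use False in \<open>auto simp: \<beta>_def\<close>)
      ultimately show ?thesis
        by simp
    qed
  qed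
  ultimately show ?thesis by blast
qed

lemma tuple_elt_Jid: "tuple_elt \<beta> \<in> Jid"
  unfolding tuple_elt_def
proof (rule lincomb_closed)
  show "ev (P1 (3 * (j + 1))) \<in> Jid" for j
    unfolding Jid_def by (rule ideal_gen_base[THEN subsetD]) auto
qed (use is_ideal_Jid in \<open>auto simp: is_ideal_def\<close>)

lemma ideal_gen_tuple_elt:
  assumes "valid_tuple \<beta>"
  shows "is_ideal (ideal_gen {tuple_elt \<beta>})" "ideal_gen {tuple_elt \<beta>} \<noteq> {zerov}"
    "ideal_gen {tuple_elt \<beta>} \<subseteq> Jid"
  using ideal_gen_base[of "{tuple_elt \<beta>}"] tuple_elt_nonzero[OF assms]
    ideal_gen_least[OF is_ideal_Jid, of "{tuple_elt \<beta>}"]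
  by (auto simp: is_ideal_ideal_gen P_span_Hc tuple_elt_P_span tuple_elt_Jid)

lemma ideal_gen_tuple_elt_eq_iff:
  assumes two: "(2::'a::field) \<noteq> 0" and three: "(3::'a) \<noteq> 0"
    and \<beta>: "valid_tuple (\<beta> :: 'a list)" and \<gamma>: "valid_tuple \<gamma>"
  shows "ideal_gen {tuple_elt \<beta>} = ideal_gen {tuple_elt \<gamma>} \<longleftrightarrow> (\<exists>c. c \<noteq> 0 \<and> \<gamma> = map (\<lambda>b. c * b) \<beta>)"
proof
  assume "\<exists>c. c \<noteq> 0 \<and> \<gamma> = map (\<lambda>b. c * b) \<beta>"
  then show "ideal_gen {tuple_elt \<beta>} = ideal_gen {tuple_elt \<gamma>}"
    by (auto simp: tuple_elt_map_mult ideal_gen_smul P_span_Hc tuple_elt_P_span)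
next
  let ?f = "\<lambda>\<beta>. to_poly P1 (tuple_elt \<beta> :: bidx \<Rightarrow> 'a)"
  have gen: "ideal_gen {tuple_elt \<beta>} = poly_multiple_ideal (?f \<beta>)" for \<beta>
    by (rule ideal_gen_eq_poly_multiple_ideal[OF two three tuple_elt_P_span to_poly_P2_tuple_elt])
  assume "ideal_gen {tuple_elt \<beta>} = ideal_gen {tuple_elt \<gamma>}"
  then have "tuple_elt \<gamma> \<in> poly_multiple_ideal (?f \<beta>)" "tuple_elt \<beta> \<in> poly_multiple_ideal (?f \<gamma>)"
    using ideal_gen_base gen by blast+
  then obtain c where c: "c \<noteq> 0" "?f \<gamma> = smult c (?f \<beta>)"
    by (auto simp: poly_multiple_ideal_def elim: dvd_antisym_poly_smult)
  have "tuple_elt \<gamma> = smul c (tuple_elt \<beta>)"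
    using c by (intro to_poly_inject[OF two])
      (simp_all add: tuple_elt_P_span P_span_Hc to_poly_P2_tuple_elt)
  then have "tuple_elt \<gamma> = tuple_elt (map (\<lambda>b. c * b) \<beta>)"
    by (simp add: tuple_elt_map_mult)
  moreover have "valid_tuple (map (\<lambda>b. c * b) \<beta>)"
    using \<beta> c(1) by (simp add: valid_tuple_def last_map)
  ultimately show "\<exists>c. c \<noteq> 0 \<and> \<gamma> = map (\<lambda>b. c * b) \<beta>"
    using tuple_elt_inject[OF \<gamma>] c(1) by blast
qed

lemma min_J_degree_tuple:
  assumes two: "(2::'a::field) \<noteq> 0" and three: "(3::'a) \<noteq> 0"
    and I: "is_ideal I" "I \<subseteq> Jid" and x: "min_J_degree I (x :: bidx \<Rightarrow> 'a)"
  shows "\<exists>\<beta>. valid_tuple \<beta> \<and> x = tuple_elt \<beta> \<and> I = ideal_gen {tuple_elt \<beta>}"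
proof -
  have IP: "I \<subseteq> P_span"
    using I(2) Jid_subset_P_span by blast
  have "x \<in> P_span" "x \<noteq> zerov"
    using x IP by (auto simp: min_J_degree_def)
  moreover have "x (P2 k) = 0" for k
    using min_J_degree_to_poly(1)[OF two three I(1) IP x]
      to_poly_eq_0_iff[OF two \<open>x \<in> P_span\<close>, of P2]
    by simp
  ultimately obtain \<beta> where "valid_tuple \<beta>" "x = tuple_elt \<beta>"
    using P_span_eq_tuple_elt by blast
  with min_J_degree_generates[OF two three I(1) IP x] show ?thesis
    by blast
qed

lemma ideal_in_Jid_tuple:
  assumes two: "(2::'a::field) \<noteq> 0" and three: "(3::'a) \<noteq> 0"
    and I: "is_ideal I" "I \<subseteq> Jid" "I \<noteq> {zerov :: bidx \<Rightarrow> 'a}"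
  shows "\<exists>\<beta>. valid_tuple \<beta> \<and> I = ideal_gen {tuple_elt \<beta>}"
proof -
  obtain y where "y \<in> I" "y \<noteq> zerov"
    using I by (auto simp: is_ideal_def)
  then obtain x where "min_J_degree I x"
    by (rule min_J_degree_exists)
  then show ?thesis
    using min_J_degree_tuple[OF two three I(1,2)] by blast
qed

lemma ideal_in_Jid_principal:
  assumes two: "(2::'a::field) \<noteq> 0" and three: "(3::'a) \<noteq> 0"
    and I: "is_ideal I" "I \<subseteq> (Jid :: (bidx \<Rightarrow> 'a) set)"
  shows "\<exists>x\<in>Hc. I = ideal_gen {x}"
proof (cases "I = {zerov}")
  case True
  then show ?thesis
    using ideal_gen_zerov by auto
next
  case False
  then show ?thesis
    using ideal_in_Jid_tuple[OF two three I False] tuple_elt_P_span P_span_Hc by blast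
qed

theorem theorem1p8:
  assumes char2: "(2::'a::field) \<noteq> 0" and char3: "(3::'a) \<noteq> 0"
  shows
    "(\<forall>\<beta>::'a list. valid_tuple \<beta> \<longrightarrow>
        is_ideal (ideal_gen {tuple_elt \<beta>}) \<and> ideal_gen {tuple_elt \<beta>} \<noteq> {zerov}
        \<and> ideal_gen {tuple_elt \<beta>} \<subseteq> (Jid :: (bidx \<Rightarrow> 'a) set))
   \<and> (\<forall>\<beta> \<gamma> :: 'a list. valid_tuple \<beta> \<longrightarrow> valid_tuple \<gamma> \<longrightarrow>
        (ideal_gen {tuple_elt \<beta>} = ideal_gen {tuple_elt \<gamma>} \<longleftrightarrow>
         (\<exists>c. c \<noteq> 0 \<and> \<gamma> = map (\<lambda>b. c * b) \<beta>)))
   \<and> (\<forall>I :: (bidx \<Rightarrow> 'a) set. is_ideal I \<and> I \<subseteq> Jid \<and> I \<noteq> {zerov} \<longrightarrow>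
        (\<exists>\<beta>. valid_tuple \<beta> \<and> I = ideal_gen {tuple_elt \<beta>}))
   \<and> (\<forall>(I :: (bidx \<Rightarrow> 'a) set) x. is_ideal I \<and> I \<subseteq> Jid \<and> x \<in> I \<and> x \<noteq> zerov \<and>
        (\<forall>y\<in>I. y \<noteq> zerov \<longrightarrow> J_degree x \<le> J_degree y) \<longrightarrow>
        (\<exists>\<beta>. valid_tuple \<beta> \<and> x = tuple_elt \<beta> \<and> I = ideal_gen {tuple_elt \<beta>}))
   \<and> (\<forall>I :: (bidx \<Rightarrow> 'a) set. is_ideal I \<and> I \<subseteq> Jid \<longrightarrow>
        (\<exists>x\<in>Hc. I = ideal_gen {x}))"
proof (intro conjI allI impI ballI)
  show "is_ideal (ideal_gen {tuple_elt \<beta>})" "ideal_gen {tuple_elt \<beta>} \<noteq> {zerov}"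
    "ideal_gen {tuple_elt \<beta>} \<subseteq> Jid" if "valid_tuple \<beta>" for \<beta> :: "'a list"
    using ideal_gen_tuple_elt[OF that] by simp_all
  show "ideal_gen {tuple_elt \<beta>} = ideal_gen {tuple_elt \<gamma>} \<longleftrightarrow>
      (\<exists>c. c \<noteq> 0 \<and> \<gamma> = map (\<lambda>b. c * b) \<beta>)"
    if "valid_tuple \<beta>" "valid_tuple \<gamma>" for \<beta> \<gamma> :: "'a list"
    using ideal_gen_tuple_elt_eq_iff[OF char2 char3 that] .
  show "\<exists>\<beta>. valid_tuple \<beta> \<and> I = ideal_gen {tuple_elt \<beta>}"
    if "is_ideal I \<and> I \<subseteq> Jid \<and> I \<noteq> {zerov}" for I :: "(bidx \<Rightarrow> 'a) set"
    using ideal_in_Jid_tuple[OF char2 char3] that by blast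
  show "\<exists>\<beta>. valid_tuple \<beta> \<and> x = tuple_elt \<beta> \<and> I = ideal_gen {tuple_elt \<beta>}"
    if "is_ideal I \<and> I \<subseteq> Jid \<and> x \<in> I \<and> x \<noteq> zerov \<and>
        (\<forall>y\<in>I. y \<noteq> zerov \<longrightarrow> J_degree x \<le> J_degree y)"
    for I :: "(bidx \<Rightarrow> 'a) set" and x
    using min_J_degree_tuple[OF char2 char3, of I x] that by (simp add: min_J_degree_def)
  show "\<exists>x\<in>Hc. I = ideal_gen {x}" if "is_ideal I \<and> I \<subseteq> Jid" for I :: "(bidx \<Rightarrow> 'a) set"
    using ideal_in_Jid_principal[OF char2 char3] that by blast
qed

end
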